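(* Away from characteristic points of a regular surface $\Sigma\subset\mathbb{M}$, the mean curvature $\mathcal H_{\nabla^{2,\alpha},L}:=\mathrm{tr}\,II^{\nabla^{2,\alpha},L}$ satisfies $$\lim_{L\to+\infty}\mathcal H_{\nabla^{2,\alpha},L}=X_1(\bar p)+X_2(\bar q)-(1-\alpha)\bar p.$$
   Context: The affine group $\mathbb{M}$ is modeled on $\{(x_1,x_2,x_3)\in\mathbb{R}^3: x_1>0\}$ with product $(m,n,s)\star(\lambda,\mu,\nu)=(m\lambda,m\mu+n,\nu+s)$. Put $X_1=x_1\partial_{x_1}$, $X_2=x_1\partial_{x_2}+\partial_{x_3}$, $X_3=x_1\partial_{x_2}$, with dual coframe $\omega_1=\frac1{x_1}dx_1$, $\omega_2=dx_3$, $\omega=\frac1{x_1}dx_2-dx_3$. For a constant $L>0$, $g_L=\omega_1\otimes\omega_1+\omega_2\otimes\omega_2+L\,\omega\otimes\omega$, so $X_1,X_2,\widetilde X_3:=L^{-1/2}X_3$ is $g_L$-orthonormal; $\langle\cdot,\cdot\rangle_L$ denotes $g_L$ and $\nabla$ its Levi-Civita connection. Let $H_2=\mathrm{span}\{X_2,X_3\}$, and let $P^2$, $P^{2,\perp}$ be the $g_L$-orthogonal projections onto $H_2$ and onto $\mathrm{span}\{X_1\}$. For a real constant $\alpha$, $\nabla^{2,\alpha}_XY=(1-\alpha)\nabla_XY+\alpha P^2\nabla_X(P^2Y)+\alpha P^{2,\perp}\nabla_X(P^{2,\perp}Y)$. A regular surface is a Euclidean $C^2$-smooth compact oriented surface $\Sigma=\{u=0\}$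 with $u$ Euclidean $C^2$ and nonvanishing Euclidean gradient. $\nabla_Hu=X_1(u)X_1+X_2(u)X_2$; characteristic points are those with $\nabla_Hu=0$. Put $p=X_1u$, $q=X_2u$, $r=\widetilde X_3u$, $l=\sqrt{p^2+q^2}$, $l_L=\sqrt{p^2+q^2+r^2}$, $\bar p=p/l$, $\bar q=q/l$, $\bar p_L=p/l_L$, $\bar q_L=q/l_L$, $\bar r_L=r/l_L$; $v_L=\bar p_LX_1+\bar q_LX_2+\bar r_L\widetilde X_3$, $e_1=\bar qX_1-\bar pX_2$, $e_2=\bar r_L\bar pX_1+\bar r_L\bar qX_2-\frac{l}{l_L}\widetilde X_3$. The second fundamental form is $II^{\nabla^{2,\alpha},L}=(\langle\nabla^{2,\alpha}_{e_i}v_L,e_j\rangle_L)_{i,j=1,2}$. *)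

theory Defs
  imports "HOL-Analysis.Analysis"
begin

type_synonym pt = "real^3"
type_synonym vfield = "real^3 \<Rightarrow> real^3"

text \<open>The affine group M as the open half space x1 > 0 of R^3.
  Vectors are written in the Euclidean basis d/dx1, d/dx2, d/dx3.\<close>
definition Mgrp :: "pt set" where "Mgrp = {x. x$1 > 0}"

definition dirD :: "(pt \<Rightarrow> 'b::real_normed_vector) \<Rightarrow> pt \<Rightarrow> pt \<Rightarrow> 'b" where
  "dirD f x v = frechet_derivative f (at x) v"

definition pd :: "3 \<Rightarrow> (pt \<Rightarrow> real) \<Rightarrow> pt \<Rightarrow> real" where
  "pd i f x = dirD f x (axis i 1)"

definition egrad :: "(pt \<Rightarrow> real) \<Rightarrow> pt \<Rightarrow> real^3" where
  "egrad f x = (\<chi> i. pd i f x)"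

definition C2_on :: "pt set \<Rightarrow> (pt \<Rightarrow> real) \<Rightarrow> bool" where
  "C2_on S f \<longleftrightarrow> (\<forall>x\<in>S. f differentiable (at x) \<and> (\<forall>i. pd i f differentiable (at x)))
      \<and> (\<forall>i j. continuous_on S (pd j (pd i f)))"

definition bracket :: "vfield \<Rightarrow> vfield \<Rightarrow> vfield" where
  "bracket X Y x = dirD Y x (X x) - dirD X x (Y x)"

definition X1 :: vfield where "X1 x = vector [x$1, 0, 0]"
definition X2 :: vfield where "X2 x = vector [0, x$1, 1]"
definition X3 :: vfield where "X3 x = vector [0, x$1, 0]"
definition X3t :: "real \<Rightarrow> vfield" where "X3t L x = (1 / sqrt L) *\<^sub>R X3 x"

text \<open>The metric g_L = w1*w1 + w2*w2 + L w*w with w1 = dx1/x1, w2 = dx3, w = dx2/x1 - dx3.\<close>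
definition gL :: "real \<Rightarrow> pt \<Rightarrow> real^3 \<Rightarrow> real^3 \<Rightarrow> real" where
  "gL L x v w = (v$1 / x$1) * (w$1 / x$1) + v$3 * w$3
      + L * (v$2 / x$1 - v$3) * (w$2 / x$1 - w$3)"

text \<open>g_L-orthonormal frame E1 = X1, E2 = X2, E3 = X3 tilde.\<close>
definition Efr :: "real \<Rightarrow> nat \<Rightarrow> vfield" where
  "Efr L k = (if k = 1 then X1 else if k = 2 then X2 else X3t L)"

text \<open>Levi-Civita connection of g_L, given by the Koszul formula, expanded in the
  g_L-orthonormal frame.\<close>
definition koszul :: "real \<Rightarrow> vfield \<Rightarrow> vfield \<Rightarrow> vfield \<Rightarrow> pt \<Rightarrow> real" where
  "koszul L X Y Z x = (1/2) *
     ( dirD (\<lambda>y. gL L y (Y y) (Z y)) x (X x)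
     + dirD (\<lambda>y. gL L y (Z y) (X y)) x (Y x)
     - dirD (\<lambda>y. gL L y (X y) (Y y)) x (Z x)
     + gL L x (bracket X Y x) (Z x)
     - gL L x (bracket Y Z x) (X x)
     + gL L x (bracket Z X x) (Y x))"

definition LC :: "real \<Rightarrow> vfield \<Rightarrow> vfield \<Rightarrow> vfield" where
  "LC L X Y x = (\<Sum>k\<in>{1,2,3}. koszul L X Y (Efr L k) x *\<^sub>R Efr L k x)"

definition P2 :: "real \<Rightarrow> pt \<Rightarrow> real^3 \<Rightarrow> real^3" where
  "P2 L x v = gL L x v (X2 x) *\<^sub>R X2 x + gL L x v (X3t L x) *\<^sub>R X3t L x"

definition P2perp :: "real \<Rightarrow> pt \<Rightarrow> real^3 \<Rightarrow> real^3" where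
  "P2perp L x v = gL L x v (X1 x) *\<^sub>R X1 x"

definition conn2 :: "real \<Rightarrow> real \<Rightarrow> vfield \<Rightarrow> vfield \<Rightarrow> vfield" where
  "conn2 \<alpha> L X Y x = (1 - \<alpha>) *\<^sub>R LC L X Y x
      + \<alpha> *\<^sub>R P2 L x (LC L X (\<lambda>y. P2 L y (Y y)) x)
      + \<alpha> *\<^sub>R P2perp L x (LC L X (\<lambda>y. P2perp L y (Y y)) x)"

definition hgrad :: "(pt \<Rightarrow> real) \<Rightarrow> vfield" where
  "hgrad u x = dirD u x (X1 x) *\<^sub>R X1 x + dirD u x (X2 x) *\<^sub>R X2 x"

definition pp :: "(pt \<Rightarrow> real) \<Rightarrow> pt \<Rightarrow> real" where "pp u x = dirD u x (X1 x)"
definition qq :: "(pt \<Rightarrow> real) \<Rightarrow> pt \<Rightarrow> real" where "qq u x = dirD u x (X2 x)"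
definition rr :: "real \<Rightarrow> (pt \<Rightarrow> real) \<Rightarrow> pt \<Rightarrow> real" where "rr L u x = dirD u x (X3t L x)"
definition ll :: "(pt \<Rightarrow> real) \<Rightarrow> pt \<Rightarrow> real" where
  "ll u x = sqrt ((pp u x)\<^sup>2 + (qq u x)\<^sup>2)"
definition llL :: "real \<Rightarrow> (pt \<Rightarrow> real) \<Rightarrow> pt \<Rightarrow> real" where
  "llL L u x = sqrt ((pp u x)\<^sup>2 + (qq u x)\<^sup>2 + (rr L u x)\<^sup>2)"

definition pbar :: "(pt \<Rightarrow> real) \<Rightarrow> pt \<Rightarrow> real" where "pbar u x = pp u x / ll u x"
definition qbar :: "(pt \<Rightarrow> real) \<Rightarrow> pt \<Rightarrow> real" where "qbar u x = qq u x / ll u x"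
definition pbarL :: "real \<Rightarrow> (pt \<Rightarrow> real) \<Rightarrow> pt \<Rightarrow> real" where "pbarL L u x = pp u x / llL L u x"
definition qbarL :: "real \<Rightarrow> (pt \<Rightarrow> real) \<Rightarrow> pt \<Rightarrow> real" where "qbarL L u x = qq u x / llL L u x"
definition rbarL :: "real \<Rightarrow> (pt \<Rightarrow> real) \<Rightarrow> pt \<Rightarrow> real" where "rbarL L u x = rr L u x / llL L u x"

definition vL :: "real \<Rightarrow> (pt \<Rightarrow> real) \<Rightarrow> vfield" where
  "vL L u x = pbarL L u x *\<^sub>R X1 x + qbarL L u x *\<^sub>R X2 x + rbarL L u x *\<^sub>R X3t L x"

definition e1 :: "(pt \<Rightarrow> real) \<Rightarrow> vfield" where
  "e1 u x = qbar u x *\<^sub>R X1 x - pbar u x *\<^sub>R X2 x"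

definition e2 :: "real \<Rightarrow> (pt \<Rightarrow> real) \<Rightarrow> vfield" where
  "e2 L u x = (rbarL L u x * pbar u x) *\<^sub>R X1 x + (rbarL L u x * qbar u x) *\<^sub>R X2 x
      - (ll u x / llL L u x) *\<^sub>R X3t L x"

definition eframe :: "real \<Rightarrow> (pt \<Rightarrow> real) \<Rightarrow> nat \<Rightarrow> vfield" where
  "eframe L u i = (if i = 1 then e1 u else e2 L u)"

definition IIf :: "real \<Rightarrow> real \<Rightarrow> (pt \<Rightarrow> real) \<Rightarrow> nat \<Rightarrow> nat \<Rightarrow> pt \<Rightarrow> real" where
  "IIf \<alpha> L u i j x = gL L x (conn2 \<alpha> L (eframe L u i) (vL L u) x) (eframe L u j x)"

definition Hcurv :: "real \<Rightarrow> real \<Rightarrow> (pt \<Rightarrow> real) \<Rightarrow> pt \<Rightarrow> real" where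
  "Hcurv \<alpha> L u x = IIf \<alpha> L u 1 1 x + IIf \<alpha> L u 2 2 x"

end

theory Submission
  imports Defs
begin

(*
  In the g_L-orthonormal frame X1, X2, X3t = X3 / sqrt L the only nonzero brackets are
  [X1, X2] = sqrt L * X3t and [X1, X3t] = X3t, so the Koszul formula gives the Levi-Civita
  connection, and with it nabla^{2,alpha}, explicitly in frame coordinates. The normal v_L is
  N / |N| for N = (p, q, r_L); as e1 and e2 are orthogonal to N, the derivative of the
  normalising factor drops out and <nabla^{2,alpha}_W v_L, W> is <w, DN(W)> / |N| plus terms of
  order zero.

  For W = e1 the first part is (qbar * e1(p) - pbar * e1(q)) / l_L, which is l / l_L times
  X1(pbar) + X2(qbar), and the zeroth-order part is alpha/2 * pbar * qbar * X3(u) / l_L.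
  For W = e2 the vector e2 itself tends to 0 (its X3t-component multiplies X3 / sqrt L), so the
  derivative part vanishes, while the zeroth-order part tends to
  -alpha/2 * pbar * qbar * X3(u) / l - (1 - alpha) * pbar. The alpha/2 terms cancel.
*)

section \<open>Coordinates in the orthonormal frame\<close>

definition frame_vec :: "real \<Rightarrow> pt \<Rightarrow> real \<Rightarrow> real \<Rightarrow> real \<Rightarrow> real^3" where
  "frame_vec L x a b c = a *\<^sub>R X1 x + b *\<^sub>R X2 x + c *\<^sub>R X3t L x"

lemma frame_vec_nth:
  "frame_vec L x a b c $ 1 = a * x$1"
  "frame_vec L x a b c $ 2 = b * x$1 + c * x$1 / sqrt L"
  "frame_vec L x a b c $ 3 = b"
  by (simp_all add: frame_vec_def X1_def X2_def X3t_def X3_def)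

lemma frame_eq_frame_vec:
  "X1 x = frame_vec L x 1 0 0" "X2 x = frame_vec L x 0 1 0" "X3t L x = frame_vec L x 0 0 1"
  by (simp_all add: frame_vec_def)

lemma frame_vec_add:
  "frame_vec L x a b c + frame_vec L x a' b' c' = frame_vec L x (a + a') (b + b') (c + c')"
  by (simp add: frame_vec_def algebra_simps)

lemma scaleR_frame_vec: "r *\<^sub>R frame_vec L x a b c = frame_vec L x (r * a) (r * b) (r * c)"
  by (simp add: frame_vec_def algebra_simps)

lemma gL_frame_vec:
  assumes "x$1 \<noteq> 0" "L > 0"
  shows "gL L x (frame_vec L x a b c) (frame_vec L x a' b' c') = a * a' + b * b' + c * c'"
  using assms unfolding gL_def frame_vec_nth by (simp add: field_simps)

lemma gL_frame_vec_frame: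
  assumes "x$1 \<noteq> 0" "L > 0"
  shows "gL L x (frame_vec L x a b c) (X1 x) = a" "gL L x (frame_vec L x a b c) (X2 x) = b"
    "gL L x (frame_vec L x a b c) (X3t L x) = c"
  unfolding frame_eq_frame_vec[where x=x and L=L] by (simp_all add: gL_frame_vec assms)

lemma P2_frame_vec:
  "x$1 \<noteq> 0 \<Longrightarrow> L > 0 \<Longrightarrow> P2 L x (frame_vec L x a b c) = frame_vec L x 0 b c"
  unfolding P2_def by (simp add: gL_frame_vec_frame) (simp add: frame_vec_def)

lemma P2perp_frame_vec:
  "x$1 \<noteq> 0 \<Longrightarrow> L > 0 \<Longrightarrow> P2perp L x (frame_vec L x a b c) = frame_vec L x a 0 0"
  unfolding P2perp_def by (simp add: gL_frame_vec_frame) (simp add: frame_vec_def)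

lemmas has_derivative_vec_nth [derivative_intros] =
  bounded_linear.has_derivative [OF bounded_linear_vec_nth]

lemma differentiable_real_sqrt [derivative_intros]:
  fixes f :: "'a::real_normed_vector \<Rightarrow> real"
  shows "f differentiable (at x) \<Longrightarrow> f x > 0 \<Longrightarrow> (\<lambda>y. sqrt (f y)) differentiable (at x)"
  unfolding differentiable_def by (blast intro: has_derivative_real_sqrt)

lemma tendsto_divide_sqrt_at_top: "(f \<longlongrightarrow> c) at_top \<Longrightarrow> ((\<lambda>L. f L / sqrt L) \<longlongrightarrow> 0) at_top"
  by (rule tendsto_divide_0[OF _ filterlim_at_top_imp_at_infinity[OF sqrt_at_top]])

lemma has_derivative_tendsto_zero:
  "(f has_derivative D) F \<Longrightarrow> (g \<longlongrightarrow> 0) G \<Longrightarrow> ((\<lambda>y. D (g y)) \<longlongrightarrow> 0) G"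
  using bounded_linear.tendsto[OF has_derivative_bounded_linear] linear_0[OF has_derivative_linear]
  by metis

lemma dirD_eq: "(f has_derivative D) (at x) \<Longrightarrow> dirD f x = D"
  by (simp add: fun_eq_iff dirD_def frechet_derivative_at[symmetric])

lemma has_derivative_dirD: "f differentiable (at x) \<Longrightarrow> (f has_derivative dirD f x) (at x)"
  unfolding dirD_def frechet_derivative_works by (simp add: eta_contract_eq)

lemma dirD_eq_pd:
  assumes "u differentiable (at y)"
  shows "dirD u y v = v$1 * pd 1 u y + v$2 * pd 2 u y + v$3 * pd 3 u y"
proof -
  have lin: "linear (dirD u y)"
    using has_derivative_dirD[OF assms] has_derivative_linear by blast
  have v: "v = v$1 *\<^sub>R axis 1 1 + v$2 *\<^sub>R axis 2 1 + v$3 *\<^sub>R axis 3 1"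
    by (simp add: vec_eq_iff forall_3 axis_def)
  show ?thesis
    unfolding pd_def by (subst v) (simp add: lin linear_add linear_cmul)
qed

lemma differentiable_dirD_field:
  assumes "open U" "x \<in> U" "\<And>y. y \<in> U \<Longrightarrow> u differentiable (at y)"
    and "\<And>i. pd i u differentiable (at x)" and "Y differentiable (at x)"
  shows "(\<lambda>y. dirD u y (Y y)) differentiable (at x)"
proof -
  have Y: "(\<lambda>y. Y y $ i) differentiable (at x)" for i
    using assms(5) unfolding differentiable_def by (blast intro: has_derivative_vec_nth)
  have "(\<lambda>y. Y y $ 1 * pd 1 u y + Y y $ 2 * pd 2 u y + Y y $ 3 * pd 3 u y) differentiable (at x)"
    by (intro derivative_intros Y assms(4))
  then obtain D where "((\<lambda>y. Y y $ 1 * pd 1 u y + Y y $ 2 * pd 2 u y + Y y $ 3 * pd 3 u y)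
      has_derivative D) (at x)"
    by (auto simp: differentiable_def)
  then have "((\<lambda>y. dirD u y (Y y)) has_derivative D) (at x)"
    by (rule has_derivative_transform_within_open[OF _ assms(1,2)]) (simp add: dirD_eq_pd assms(3))
  then show ?thesis
    by (auto simp: differentiable_def)
qed

lemma normalized_has_derivative:
  fixes N1 N2 N3 F :: "pt \<Rightarrow> real"
  assumes N: "(N1 has_derivative D1) (at x)" "(N2 has_derivative D2) (at x)"
      "(N3 has_derivative D3) (at x)"
    and F: "(F has_derivative DF) (at x)"
    and n: "n = sqrt (N1 x^2 + N2 x^2 + N3 x^2)" "n > 0"
  shows "((\<lambda>y. F y / sqrt (N1 y^2 + N2 y^2 + N3 y^2)) has_derivative
    (\<lambda>v. DF v / n - F x * (N1 x * D1 v + N2 x * D2 v + N3 x * D3 v) / n^3)) (at x)"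
proof -
  have pos: "N1 x^2 + N2 x^2 + N3 x^2 > 0"
    using n by simp
  have "((\<lambda>y. N1 y^2 + N2 y^2 + N3 y^2) has_derivative
      (\<lambda>v. 2 * (N1 x * D1 v + N2 x * D2 v + N3 x * D3 v))) (at x)"
    by (rule derivative_eq_intros refl N)+ (simp add: fun_eq_iff algebra_simps)
  from has_derivative_real_sqrt[OF pos this]
  have "((\<lambda>y. sqrt (N1 y^2 + N2 y^2 + N3 y^2)) has_derivative
      (\<lambda>v. (N1 x * D1 v + N2 x * D2 v + N3 x * D3 v) / n)) (at x)"
    unfolding n(1)[symmetric]
    by (rule has_derivative_eq_rhs) (use n(2) in \<open>simp add: fun_eq_iff field_simps\<close>)
  from has_derivative_divide'[OF F this] have "((\<lambda>y. F y / sqrt (N1 y^2 + N2 y^2 + N3 y^2))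
      has_derivative (\<lambda>v. (DF v * n - F x * ((N1 x * D1 v + N2 x * D2 v + N3 x * D3 v) / n))
        / (n * n))) (at x)"
    using n(2) by (simp only: n(1)[symmetric])
  then show ?thesis
    by (rule has_derivative_eq_rhs) (use n(2) in \<open>simp add: fun_eq_iff field_simps power3_eq_cube\<close>)
qed

section \<open>The connection in frame coordinates\<close>

lemma X1_has_derivative: "(X1 has_derivative X1) F"
proof -
  have X1_eq: "X1 = (\<lambda>y. y$1 *\<^sub>R vector [1, 0, 0])"
    by (simp add: fun_eq_iff X1_def vec_eq_iff forall_3)
  show ?thesis
    unfolding X1_eq by (rule derivative_eq_intros refl has_derivative_id | simp)+
qed

lemma X2_has_derivative: "(X2 has_derivative X3) F"
proof -
  have X2_eq: "X2 = (\<lambda>y. y$1 *\<^sub>R vector [0, 1, 0] + vector [0, 0, 1])"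
    and X3_eq: "X3 = (\<lambda>y. y$1 *\<^sub>R vector [0, 1, 0])"
    by (simp_all add: fun_eq_iff X2_def X3_def vec_eq_iff forall_3)
  show ?thesis
    unfolding X2_eq X3_eq by (rule derivative_eq_intros refl has_derivative_id | simp)+
qed

lemma X3t_has_derivative: "(X3t L has_derivative X3t L) F"
proof -
  have X3t_eq: "X3t L = (\<lambda>y. (1 / sqrt L) *\<^sub>R (y$1 *\<^sub>R vector [0, 1, 0]))"
    by (simp add: fun_eq_iff X3t_def X3_def vec_eq_iff forall_3)
  show ?thesis
    unfolding X3t_eq by (rule derivative_eq_intros refl has_derivative_id | simp)+
qed

lemma frame_differentiable: "X1 differentiable F" "X2 differentiable F" "X3t L differentiable F"
  unfolding differentiable_def
  by (blast intro: X1_has_derivative X2_has_derivative X3t_has_derivative)+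

lemma frame_vec_has_derivative:
  assumes "(f1 has_derivative D1) (at x)" "(f2 has_derivative D2) (at x)"
    "(f3 has_derivative D3) (at x)"
  shows "((\<lambda>y. frame_vec L y (f1 y) (f2 y) (f3 y)) has_derivative
    (\<lambda>v. frame_vec L x (D1 v) (D2 v) (D3 v) + f1 x *\<^sub>R X1 v + f2 x *\<^sub>R X3 v + f3 x *\<^sub>R X3t L v))
    (at x)"
  unfolding frame_vec_def
  by (rule derivative_eq_intros refl assms X1_has_derivative X2_has_derivative X3t_has_derivative
      | simp add: algebra_simps)+

lemma open_Mgrp: "open Mgrp"
  unfolding Mgrp_def by (intro open_Collect_less continuous_intros)

lemma gL_sym: "gL L x v w = gL L x w v"
  by (simp add: gL_def algebra_simps)

lemma gL_diff_left: "gL L x (a - b) c = gL L x a c - gL L x b c"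
  by (simp add: gL_def algebra_simps diff_divide_distrib)

definition gL_deriv :: "real \<Rightarrow> pt \<Rightarrow> real^3 \<Rightarrow> real^3 \<Rightarrow> real^3 \<Rightarrow> real" where
  "gL_deriv L x w v z = w$1 * (-2 * v$1 * z$1 / (x$1)^3
      + L * ((- v$2 / (x$1)^2) * (z$2 / x$1 - z$3) + (v$2 / x$1 - v$3) * (- z$2 / (x$1)^2)))"

lemma gL_deriv_sym: "gL_deriv L x w v z = gL_deriv L x w z v"
  by (simp add: gL_deriv_def algebra_simps)

lemma gL_has_derivative:
  assumes "(Y has_derivative DY) (at x)" "(Z has_derivative DZ) (at x)" "x$1 \<noteq> 0"
  shows "((\<lambda>y. gL L y (Y y) (Z y)) has_derivative
     (\<lambda>v. gL_deriv L x v (Y x) (Z x) + gL L x (DY v) (Z x) + gL L x (Y x) (DZ v))) (at x)"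
  unfolding gL_def
  apply (rule derivative_eq_intros refl assms has_derivative_id | simp add: assms)+
  apply (simp add: fun_eq_iff gL_deriv_def gL_def field_simps assms power2_eq_square power3_eq_cube)
  done

lemma koszul_eq:
  assumes X: "(X has_derivative DX) (at x)" and Y: "(Y has_derivative DY) (at x)"
    and Z: "(Z has_derivative DZ) (at x)" and x: "x$1 \<noteq> 0"
  shows "koszul L X Y Z x = gL L x (DY (X x)) (Z x)
     + (gL_deriv L x (X x) (Y x) (Z x) + gL_deriv L x (Y x) (Z x) (X x)
        - gL_deriv L x (Z x) (X x) (Y x)) / 2"
proof -
  have dirD_gL: "dirD (\<lambda>y. gL L y (A y) (B y)) x v
      = gL_deriv L x v (A x) (B x) + gL L x (DA v) (B x) + gL L x (A x) (DB v)"
    if "(A has_derivative DA) (at x)" "(B has_derivative DB) (at x)" for A DA B DB v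
    by (simp add: dirD_eq[OF gL_has_derivative[OF that x]])
  show ?thesis
    unfolding koszul_def dirD_gL[OF Y Z] dirD_gL[OF Z X] dirD_gL[OF X Y] bracket_def gL_diff_left
      dirD_eq[OF X] dirD_eq[OF Y] dirD_eq[OF Z]
    using gL_sym[of L x "Y x" "DZ (X x)"] gL_sym[of L x "Z x" "DX (Y x)"]
      gL_sym[of L x "X x" "DY (Z x)"] gL_deriv_sym[of L x "Y x" "Z x" "X x"]
      gL_deriv_sym[of L x "X x" "Y x" "Z x"] gL_deriv_sym[of L x "Z x" "X x" "Y x"]
    by (simp add: algebra_simps add_divide_distrib diff_divide_distrib)
qed

lemma LC_frame_vec:
  assumes W: "(W has_derivative DW) (at x)"
    and f: "(f1 has_derivative D1) (at x)" "(f2 has_derivative D2) (at x)"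
      "(f3 has_derivative D3) (at x)"
    and V: "open S" "x \<in> S" "\<And>y. y \<in> S \<Longrightarrow> V y = frame_vec L y (f1 y) (f2 y) (f3 y)"
    and x: "x$1 > 0" and L: "L > 0"
    and Wx: "W x = frame_vec L x w1 w2 w3"
  shows "LC L W V x = frame_vec L x
     (D1 (W x) + sqrt L / 2 * (w2 * f3 x + w3 * f2 x) + w3 * f3 x)
     (D2 (W x) - sqrt L / 2 * (w1 * f3 x + w3 * f1 x))
     (D3 (W x) + sqrt L / 2 * (w1 * f2 x - w2 * f1 x) - w3 * f1 x)"
proof -
  define DV where "DV v = frame_vec L x (D1 v) (D2 v) (D3 v)
    + f1 x *\<^sub>R X1 v + f2 x *\<^sub>R X3 v + f3 x *\<^sub>R X3t L v" for v
  have DV: "(V has_derivative DV) (at x)"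
    unfolding DV_def
    by (rule has_derivative_transform_within_open[OF frame_vec_has_derivative[OF f] V(1,2)])
      (simp add: V(3))
  have Vx: "V x = frame_vec L x (f1 x) (f2 x) (f3 x)"
    using V by simp
  define s where "s = sqrt L"
  have s: "s > 0" "L = s * s"
    using L by (simp_all add: s_def)
  note koszul = koszul_eq[OF W DV _ less_imp_neq[OF x, symmetric]]
  have "koszul L W V X1 x = D1 (W x) + s / 2 * (w2 * f3 x + w3 * f2 x) + w3 * f3 x"
    "koszul L W V X2 x = D2 (W x) - s / 2 * (w1 * f3 x + w3 * f1 x)"
    "koszul L W V (X3t L) x = D3 (W x) + s / 2 * (w1 * f2 x - w2 * f1 x) - w3 * f1 x"
    unfolding koszul[OF X1_has_derivative] koszul[OF X2_has_derivative]
      koszul[OF X3t_has_derivative] DV_def Wx Vx gL_def gL_deriv_def frame_vec_nth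
      X1_def X2_def X3_def X3t_def s_def[symmetric]
      vector_add_component vector_scaleR_component vector_3
    using x s by (simp_all add: field_simps power2_eq_square power3_eq_cube)
  then show ?thesis
    by (simp add: LC_def Efr_def frame_vec_def s_def)
qed

lemma gL_conn2_frame_vec:
  assumes W: "W differentiable (at x)"
    and f: "(f1 has_derivative D1) (at x)" "(f2 has_derivative D2) (at x)"
      "(f3 has_derivative D3) (at x)"
    and V: "\<And>y. V y = frame_vec L y (f1 y) (f2 y) (f3 y)"
    and x: "x$1 > 0" and L: "L > 0"
    and Wx: "W x = frame_vec L x w1 w2 w3"
  shows "gL L x (conn2 \<alpha> L W V x) (W x) = w1 * D1 (W x) + w2 * D2 (W x) + w3 * D3 (W x)
     + sqrt L * ((1 - \<alpha>/2) * w1 * w3 * f2 x - \<alpha>/2 * w1 * w2 * f3 x - (1 - \<alpha>) * w2 * w3 * f1 x)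
     + (1 - \<alpha>) * w3 * (w1 * f3 x - w3 * f1 x)"
proof -
  obtain DW where DW: "(W has_derivative DW) (at x)"
    using W by (auto simp: differentiable_def)
  have S: "open Mgrp" "x \<in> Mgrp"
    using open_Mgrp x by (auto simp: Mgrp_def)
  have Mgrp: "y$1 \<noteq> 0" if "y \<in> Mgrp" for y
    using that by (simp add: Mgrp_def)
  have c0: "((\<lambda>y. 0) has_derivative (\<lambda>v. 0)) (at x)"
    by (rule has_derivative_const)
  note LC = LC_frame_vec[OF DW _ _ _ S _ x L Wx]
  have "LC L W V x = frame_vec L x
     (D1 (W x) + sqrt L / 2 * (w2 * f3 x + w3 * f2 x) + w3 * f3 x)
     (D2 (W x) - sqrt L / 2 * (w1 * f3 x + w3 * f1 x))
     (D3 (W x) + sqrt L / 2 * (w1 * f2 x - w2 * f1 x) - w3 * f1 x)"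
    by (rule LC[OF f]) (simp add: V)
  moreover have "LC L W (\<lambda>y. P2 L y (V y)) x = frame_vec L x
     (0 + sqrt L / 2 * (w2 * f3 x + w3 * f2 x) + w3 * f3 x)
     (D2 (W x) - sqrt L / 2 * (w1 * f3 x + w3 * 0))
     (D3 (W x) + sqrt L / 2 * (w1 * f2 x - w2 * 0) - w3 * 0)"
    by (rule LC[OF c0 f(2,3)]) (simp add: V P2_frame_vec Mgrp L)
  moreover have "LC L W (\<lambda>y. P2perp L y (V y)) x = frame_vec L x
     (D1 (W x) + sqrt L / 2 * (w2 * 0 + w3 * 0) + w3 * 0)
     (0 - sqrt L / 2 * (w1 * 0 + w3 * f1 x))
     (0 + sqrt L / 2 * (w1 * 0 - w2 * f1 x) - w3 * f1 x)"
    by (rule LC[OF f(1) c0 c0]) (simp add: V P2perp_frame_vec Mgrp L)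
  moreover have "x$1 \<noteq> 0"
    using x by simp
  ultimately show ?thesis
    unfolding conn2_def Wx
    by (simp add: P2_frame_vec P2perp_frame_vec scaleR_frame_vec frame_vec_add gL_frame_vec L)
      (simp add: field_simps power2_eq_square)
qed

lemma gL_conn2_normalized:
  assumes W: "W differentiable (at x)"
    and N: "(N1 has_derivative D1) (at x)" "(N2 has_derivative D2) (at x)"
      "(N3 has_derivative D3) (at x)"
    and n: "\<And>y. n y = sqrt (N1 y^2 + N2 y^2 + N3 y^2)" "n x > 0"
    and V: "\<And>y. V y = frame_vec L y (N1 y / n y) (N2 y / n y) (N3 y / n y)"
    and x: "x$1 > 0" and L: "L > 0"
    and Wx: "W x = frame_vec L x w1 w2 w3"
    and orthogonal: "w1 * N1 x + w2 * N2 x + w3 * N3 x = 0"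
  shows "gL L x (conn2 \<alpha> L W V x) (W x)
     = (w1 * D1 (W x) + w2 * D2 (W x) + w3 * D3 (W x)) / n x
     + sqrt L * ((1 - \<alpha>/2) * w1 * w3 * (N2 x / n x) - \<alpha>/2 * w1 * w2 * (N3 x / n x)
        - (1 - \<alpha>) * w2 * w3 * (N1 x / n x))
     + (1 - \<alpha>) * w3 * (w1 * (N3 x / n x) - w3 * (N1 x / n x))"
proof -
  define DN where "DN v = N1 x * D1 v + N2 x * D2 v + N3 x * D3 v" for v
  have "((\<lambda>y. F y / n y) has_derivative (\<lambda>v. DF v / n x - F x * DN v / n x ^ 3)) (at x)"
    if "(F has_derivative DF) (at x)" for F DF
  proof -
    have "(\<lambda>y. F y / n y) = (\<lambda>y. F y / sqrt (N1 y^2 + N2 y^2 + N3 y^2))"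
      by (simp add: n(1))
    then show ?thesis
      unfolding DN_def by (simp only:) (rule normalized_has_derivative[OF N that n])
  qed
  note frame = gL_conn2_frame_vec[OF W this[OF N(1)] this[OF N(2)] this[OF N(3)] V x L Wx]
  have deriv_sum: "w1 * (D1 (W x) / n x - N1 x * DN (W x) / n x ^ 3)
      + w2 * (D2 (W x) / n x - N2 x * DN (W x) / n x ^ 3)
      + w3 * (D3 (W x) / n x - N3 x * DN (W x) / n x ^ 3)
      = (w1 * D1 (W x) + w2 * D2 (W x) + w3 * D3 (W x)) / n x
        - (w1 * N1 x + w2 * N2 x + w3 * N3 x) * DN (W x) / n x ^ 3"
    by (simp add: algebra_simps add_divide_distrib diff_divide_distrib)
  show ?thesis
    unfolding frame deriv_sum orthogonal by simp
qed

lemma IIf_diag: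
  "IIf \<alpha> L u 1 1 x = gL L x (conn2 \<alpha> L (e1 u) (vL L u) x) (e1 u x)"
  "IIf \<alpha> L u 2 2 x = gL L x (conn2 \<alpha> L (e2 L u) (vL L u) x) (e2 L u x)"
  by (simp_all add: IIf_def eframe_def)

section \<open>The limit at a non-characteristic point\<close>

locale noncharacteristic_point =
  fixes u :: "pt \<Rightarrow> real" and U :: "pt set" and x0 :: pt
  assumes open_U: "open U" and U_Mgrp: "U \<subseteq> Mgrp" and C2_u: "C2_on U u"
    and x0_U: "x0 \<in> U" and hgrad_nonzero: "hgrad u x0 \<noteq> 0"
begin

lemma x0_pos: "x0$1 > 0"
  using U_Mgrp x0_U by (auto simp: Mgrp_def)

lemma differentiable_dirD_at_x0:
  "Y differentiable (at x0) \<Longrightarrow> (\<lambda>y. dirD u y (Y y)) differentiable (at x0)"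
  using C2_u x0_U by (intro differentiable_dirD_field[OF open_U]) (auto simp: C2_on_def)

lemma pp_has_derivative: "(pp u has_derivative dirD (pp u) x0) (at x0)"
  and qq_has_derivative: "(qq u has_derivative dirD (qq u) x0) (at x0)"
  and rr1_has_derivative: "(rr 1 u has_derivative dirD (rr 1 u) x0) (at x0)"
  unfolding pp_def[abs_def] qq_def[abs_def] rr_def[abs_def]
  by (intro has_derivative_dirD differentiable_dirD_at_x0 frame_differentiable)+

(* rr 1 u is X3 u, since X3t 1 = X3. *)
lemma rr_eq:
  assumes "y \<in> U"
  shows "rr L u y = rr 1 u y / sqrt L"
proof -
  have "linear (dirD u y)"
    using C2_u assms has_derivative_dirD[THEN has_derivative_linear] by (auto simp: C2_on_def)
  then show ?thesis
    by (simp add: rr_def X3t_def linear_cmul)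
qed

lemma rr_has_derivative: "(rr L u has_derivative dirD (rr L u) x0) (at x0)"
  and dirD_rr: "dirD (rr L u) x0 v = dirD (rr 1 u) x0 v / sqrt L"
proof -
  have "((\<lambda>y. rr 1 u y / sqrt L) has_derivative (\<lambda>v. dirD (rr 1 u) x0 v / sqrt L)) (at x0)"
    by (rule bounded_linear.has_derivative[OF bounded_linear_divide rr1_has_derivative])
  then have D: "(rr L u has_derivative (\<lambda>v. dirD (rr 1 u) x0 v / sqrt L)) (at x0)"
    by (rule has_derivative_transform_within_open[OF _ open_U x0_U]) (rule rr_eq[symmetric])
  then show "(rr L u has_derivative dirD (rr L u) x0) (at x0)"
    by (simp only: dirD_eq[OF D])
  show "dirD (rr L u) x0 v = dirD (rr 1 u) x0 v / sqrt L"
    by (simp only: dirD_eq[OF D])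
qed

lemma ll_pos: "ll u x0 > 0"
proof -
  have "pp u x0 \<noteq> 0 \<or> qq u x0 \<noteq> 0"
  proof (rule ccontr)
    assume "\<not> (pp u x0 \<noteq> 0 \<or> qq u x0 \<noteq> 0)"
    then have "hgrad u x0 = 0"
      by (simp add: hgrad_def flip: pp_def qq_def)
    with hgrad_nonzero show False
      by contradiction
  qed
  then show ?thesis
    by (simp add: ll_def sum_power2_gt_zero_iff)
qed

lemma llL_pos: "llL L u x0 > 0"
  using ll_pos by (simp add: ll_def llL_def add_pos_nonneg)

lemma pbar_has_derivative: "(pbar u has_derivative (\<lambda>v. qbar u x0 *
    (qbar u x0 * dirD (pp u) x0 v - pbar u x0 * dirD (qq u) x0 v) / ll u x0)) (at x0)"
  and qbar_has_derivative: "(qbar u has_derivative (\<lambda>v. pbar u x0 *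
    (pbar u x0 * dirD (qq u) x0 v - qbar u x0 * dirD (pp u) x0 v) / ll u x0)) (at x0)"
proof -
  have l: "ll u x0 = sqrt ((pp u x0)^2 + (qq u x0)^2 + 0^2)" "ll u x0 > 0"
    using ll_pos by (simp_all add: ll_def)
  have l2: "ll u x0 * ll u x0 = pp u x0 * pp u x0 + qq u x0 * qq u x0"
    by (simp add: ll_def flip: power2_eq_square)
  have pq_eq: "(\<lambda>y. F y / ll u y) = (\<lambda>y. F y / sqrt ((pp u y)^2 + (qq u y)^2 + 0^2))" for F
    by (simp add: ll_def)
  note normalized = normalized_has_derivative[OF pp_has_derivative qq_has_derivative
      has_derivative_const _ l, unfolded pq_eq[symmetric]]
  show "(pbar u has_derivative (\<lambda>v. qbar u x0 *
    (qbar u x0 * dirD (pp u) x0 v - pbar u x0 * dirD (qq u) x0 v) / ll u x0)) (at x0)"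
    unfolding pbar_def[abs_def]
    by (rule normalized[OF pp_has_derivative, THEN has_derivative_eq_rhs])
      (use l(2) in \<open>simp add: fun_eq_iff qbar_def pbar_def field_simps power2_eq_square power3_eq_cube,
          simp add: mult.assoc[symmetric] l2 distrib_right\<close>)
  show "(qbar u has_derivative (\<lambda>v. pbar u x0 *
    (pbar u x0 * dirD (qq u) x0 v - qbar u x0 * dirD (pp u) x0 v) / ll u x0)) (at x0)"
    unfolding qbar_def[abs_def]
    by (rule normalized[OF qq_has_derivative, THEN has_derivative_eq_rhs])
      (use l(2) in \<open>simp add: fun_eq_iff qbar_def pbar_def field_simps power2_eq_square power3_eq_cube,
          simp add: mult.assoc[symmetric] l2 distrib_right\<close>)
qed

lemma pbar_pp_qbar_qq: "pbar u x0 * pp u x0 + qbar u x0 * qq u x0 = ll u x0"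
proof -
  have "(ll u x0)^2 = (pp u x0)^2 + (qq u x0)^2"
    by (simp add: ll_def)
  then show ?thesis
    using ll_pos by (simp add: pbar_def qbar_def field_simps power2_eq_square)
qed

lemma horizontal_divergence_eq:
  "dirD (pbar u) x0 (X1 x0) + dirD (qbar u) x0 (X2 x0)
    = (qbar u x0 * dirD (pp u) x0 (e1 u x0) - pbar u x0 * dirD (qq u) x0 (e1 u x0)) / ll u x0"
proof -
  have "linear (dirD (pp u) x0)" "linear (dirD (qq u) x0)"
    using pp_has_derivative qq_has_derivative by (simp_all add: has_derivative_linear)
  moreover have "dirD (pbar u) x0 = (\<lambda>v. qbar u x0 *
      (qbar u x0 * dirD (pp u) x0 v - pbar u x0 * dirD (qq u) x0 v) / ll u x0)"
    "dirD (qbar u) x0 = (\<lambda>v. pbar u x0 *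
      (pbar u x0 * dirD (qq u) x0 v - qbar u x0 * dirD (pp u) x0 v) / ll u x0)"
    using pbar_has_derivative qbar_has_derivative by (simp_all add: dirD_eq)
  ultimately show ?thesis
    using ll_pos by (simp add: e1_def linear_diff linear_cmul field_simps)
qed

lemma e1_differentiable: "e1 u differentiable (at x0)"
  using pbar_has_derivative qbar_has_derivative unfolding e1_def[abs_def]
  by (intro derivative_intros frame_differentiable) (auto simp: differentiable_def)

lemma e2_differentiable: "e2 L u differentiable (at x0)"
proof -
  have N: "pp u differentiable (at x0)" "qq u differentiable (at x0)" "rr L u differentiable (at x0)"
    using pp_has_derivative qq_has_derivative rr_has_derivative by (auto simp: differentiable_def)
  have "pbar u differentiable (at x0)" "qbar u differentiable (at x0)"
    using pbar_has_derivative qbar_has_derivative by (auto simp: differentiable_def)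
  moreover have "ll u differentiable (at x0)" "llL L u differentiable (at x0)"
    using ll_pos llL_pos[of L] unfolding ll_def[abs_def] llL_def[abs_def]
    by (auto intro!: derivative_intros N)
  moreover have "rbarL L u differentiable (at x0)"
    using llL_pos[of L] unfolding rbarL_def[abs_def] by (auto intro!: derivative_intros N calculation)
  ultimately show ?thesis
    unfolding e2_def[abs_def] using llL_pos[of L]
    by (auto intro!: derivative_intros frame_differentiable)
qed

lemma gL_conn2_vL:
  assumes "L > 0" and "W differentiable (at x0)" and "W x0 = frame_vec L x0 w1 w2 w3"
    and "w1 * pp u x0 + w2 * qq u x0 + w3 * rr L u x0 = 0"
  shows "gL L x0 (conn2 \<alpha> L W (vL L u) x0) (W x0)
     = (w1 * dirD (pp u) x0 (W x0) + w2 * dirD (qq u) x0 (W x0)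
         + w3 * dirD (rr L u) x0 (W x0)) / llL L u x0
     + sqrt L * ((1 - \<alpha>/2) * w1 * w3 * (qq u x0 / llL L u x0)
         - \<alpha>/2 * w1 * w2 * (rr L u x0 / llL L u x0) - (1 - \<alpha>) * w2 * w3 * (pp u x0 / llL L u x0))
     + (1 - \<alpha>) * w3 * (w1 * (rr L u x0 / llL L u x0) - w3 * (pp u x0 / llL L u x0))"
proof -
  have "vL L u y = frame_vec L y (pp u y / llL L u y) (qq u y / llL L u y) (rr L u y / llL L u y)"
    for y
    by (simp add: vL_def frame_vec_def pbarL_def qbarL_def rbarL_def)
  from gL_conn2_normalized[OF assms(2) pp_has_derivative qq_has_derivative rr_has_derivative
      llL_def llL_pos this x0_pos assms(1,3,4)]
  show ?thesis .
qed

lemma IIf11_eq: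
  assumes "L > 0"
  shows "IIf \<alpha> L u 1 1 x0
    = (qbar u x0 * dirD (pp u) x0 (e1 u x0) - pbar u x0 * dirD (qq u) x0 (e1 u x0)) / llL L u x0
      + \<alpha> * pbar u x0 * qbar u x0 * rr 1 u x0 / (2 * llL L u x0)"
proof -
  have e1: "e1 u x0 = frame_vec L x0 (qbar u x0) (- pbar u x0) 0"
    by (simp add: e1_def frame_vec_def)
  have "qbar u x0 * pp u x0 + - pbar u x0 * qq u x0 + 0 * rr L u x0 = 0"
    by (simp add: pbar_def qbar_def)
  note II = gL_conn2_vL[OF assms e1_differentiable e1 this, of \<alpha>, folded e1]
  show ?thesis
    unfolding IIf_diag II rr_eq[OF x0_U, of L] using assms by simp
qed

lemma IIf22_eq:
  assumes "L > 0"
  shows "IIf \<alpha> L u 2 2 x0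
    = (rbarL L u x0 * (pbar u x0 * dirD (pp u) x0 (e2 L u x0) + qbar u x0 * dirD (qq u) x0 (e2 L u x0))
        - ll u x0 / llL L u x0 * dirD (rr L u) x0 (e2 L u x0)) / llL L u x0
      + rr 1 u x0 / llL L u x0 * ((1 - \<alpha>) * qbar u x0 * (ll u x0 / llL L u x0) * (pp u x0 / llL L u x0)
        - (1 - \<alpha>/2) * pbar u x0 * (ll u x0 / llL L u x0) * (qq u x0 / llL L u x0)
        - \<alpha>/2 * pbar u x0 * qbar u x0 * rbarL L u x0 * rbarL L u x0)
      - (1 - \<alpha>) * (ll u x0 / llL L u x0)
        * (pbar u x0 * rbarL L u x0 * rbarL L u x0 + ll u x0 / llL L u x0 * (pp u x0 / llL L u x0))"
proof -
  have e2: "e2 L u x0 = frame_vec L x0 (rbarL L u x0 * pbar u x0) (rbarL L u x0 * qbar u x0)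
      (- (ll u x0 / llL L u x0))"
    by (simp add: e2_def frame_vec_def)
  have orthogonal: "rbarL L u x0 * pbar u x0 * pp u x0 + rbarL L u x0 * qbar u x0 * qq u x0
      + - (ll u x0 / llL L u x0) * rr L u x0 = 0" (is "?lhs = 0")
  proof -
    have "?lhs = rbarL L u x0 * (pbar u x0 * pp u x0 + qbar u x0 * qq u x0) - ll u x0 * rbarL L u x0"
      by (simp add: rbarL_def algebra_simps)
    then show ?thesis
      by (simp add: pbar_pp_qbar_qq)
  qed
  note II = gL_conn2_vL[OF assms e2_differentiable e2 orthogonal, of \<alpha>, folded e2]
  have rbarL: "rr L u x0 / llL L u x0 = rbarL L u x0"
    by (simp add: rbarL_def)
  \<comment> \<open>Every term with a factor sqrt L also carries rbarL; their product stays bounded.\<close>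
  have sqrt_rbarL: "sqrt L * rbarL L u x0 = rr 1 u x0 / llL L u x0"
    using assms by (simp add: rbarL_def rr_eq[OF x0_U, of L])
  show ?thesis
    unfolding IIf_diag II rbarL sqrt_rbarL[symmetric] by (simp add: algebra_simps)
qed

lemma rr_tendsto: "((\<lambda>L. rr L u x0) \<longlongrightarrow> 0) at_top"
proof -
  have "(\<lambda>L. rr L u x0) = (\<lambda>L. rr 1 u x0 / sqrt L)"
    by (rule ext) (rule rr_eq[OF x0_U])
  then show ?thesis
    using tendsto_divide_sqrt_at_top[OF tendsto_const] by simp
qed

lemma llL_tendsto: "((\<lambda>L. llL L u x0) \<longlongrightarrow> ll u x0) at_top"
proof -
  have "((\<lambda>L. sqrt ((pp u x0)^2 + (qq u x0)^2 + (rr L u x0)^2))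
      \<longlongrightarrow> sqrt ((pp u x0)^2 + (qq u x0)^2 + 0^2)) at_top"
    by (intro tendsto_intros rr_tendsto)
  then show ?thesis
    by (simp add: llL_def ll_def)
qed

lemma rbarL_tendsto: "((\<lambda>L. rbarL L u x0) \<longlongrightarrow> 0) at_top"
  using tendsto_divide[OF rr_tendsto llL_tendsto] ll_pos by (simp add: rbarL_def[abs_def])

lemma e2_tendsto: "((\<lambda>L. e2 L u x0) \<longlongrightarrow> 0) at_top"
proof -
  have "((\<lambda>L. (rbarL L u x0 * pbar u x0) *\<^sub>R X1 x0 + (rbarL L u x0 * qbar u x0) *\<^sub>R X2 x0
      - (ll u x0 / llL L u x0) *\<^sub>R ((1 / sqrt L) *\<^sub>R X3 x0))
    \<longlongrightarrow> (0 * pbar u x0) *\<^sub>R X1 x0 + (0 * qbar u x0) *\<^sub>R X2 x0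
      - (ll u x0 / ll u x0) *\<^sub>R (0 *\<^sub>R X3 x0)) at_top"
    using ll_pos
    by (intro tendsto_intros rbarL_tendsto llL_tendsto tendsto_divide_sqrt_at_top[OF tendsto_const])
      simp
  then show ?thesis
    by (simp add: e2_def[abs_def] X3t_def)
qed

lemma rr_derivative_e2_tendsto: "((\<lambda>L. dirD (rr L u) x0 (e2 L u x0)) \<longlongrightarrow> 0) at_top"
proof -
  have "(\<lambda>L. dirD (rr L u) x0 (e2 L u x0)) = (\<lambda>L. dirD (rr 1 u) x0 (e2 L u x0) / sqrt L)"
    by (rule ext) (rule dirD_rr)
  then show ?thesis
    using tendsto_divide_sqrt_at_top[OF has_derivative_tendsto_zero[OF rr1_has_derivative e2_tendsto]]
    by simp
qed

lemma IIf11_tendsto: "((\<lambda>L. IIf \<alpha> L u 1 1 x0) \<longlongrightarrow>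
    dirD (pbar u) x0 (X1 x0) + dirD (qbar u) x0 (X2 x0)
      + \<alpha> * pbar u x0 * qbar u x0 * rr 1 u x0 / (2 * ll u x0)) at_top"
  unfolding horizontal_divergence_eq
  by (rule Lim_transform_eventually[OF _ eventually_mono[OF eventually_gt_at_top IIf11_eq[symmetric]]])
    (use ll_pos in \<open>auto intro!: tendsto_intros llL_tendsto\<close>)

lemma IIf22_tendsto: "((\<lambda>L. IIf \<alpha> L u 2 2 x0) \<longlongrightarrow>
    - (\<alpha> * pbar u x0 * qbar u x0 * rr 1 u x0 / (2 * ll u x0)) - (1 - \<alpha>) * pbar u x0) at_top"
  by (rule Lim_transform_eventually[OF _ eventually_mono[OF eventually_gt_at_top IIf22_eq[symmetric]]])
    (use ll_pos in \<open>auto intro!: tendsto_eq_intros llL_tendsto rbarL_tendsto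
        has_derivative_tendsto_zero[OF pp_has_derivative e2_tendsto]
        has_derivative_tendsto_zero[OF qq_has_derivative e2_tendsto]
        rr_derivative_e2_tendsto
        simp: pbar_def qbar_def field_simps\<close>)

end

theorem proposition3p7:
  fixes u :: "real^3 \<Rightarrow> real" and U :: "(real^3) set" and \<alpha> :: real and x0 :: "real^3"
  assumes "open U" and "U \<subseteq> Mgrp"
    and "C2_on U u"
    and "compact {x\<in>U. u x = 0}"
    and "\<forall>x\<in>{x\<in>U. u x = 0}. egrad u x \<noteq> 0"
    and "x0 \<in> {x\<in>U. u x = 0}"
    and "hgrad u x0 \<noteq> 0"
  shows "((\<lambda>L. Hcurv \<alpha> L u x0) \<longlongrightarrow>
           dirD (pbar u) x0 (X1 x0) + dirD (qbar u) x0 (X2 x0) - (1 - \<alpha>) * pbar u x0) at_top"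
proof -
  interpret noncharacteristic_point u U x0
    using assms by unfold_locales auto
  show ?thesis
    unfolding Hcurv_def
    by (rule tendsto_eq_rhs[OF tendsto_add[OF IIf11_tendsto IIf22_tendsto]]) simp
qed

end
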